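(* Let $A\in\mathbb{R}^{n\times n}$ be nonsingular. Let $A=U-V$ be a convergent regular splitting and let $U=F-G$ be a convergent weak regular splitting of type II such that $VF^{-1}G=GF^{-1}V$. Then the stationary two-stage iterative method is convergent for any initial vector $x_0$; that is, for every positive integer $s$, the matrix $$T_{s}=(F^{-1}G)^{s}+\sum_{j=0}^{s-1}(F^{-1}G)^{j}F^{-1}V$$ satisfies $\rho(T_s)<1$, so that the iterates $x_{k+1}=T_s x_k + \sum_{j=0}^{s-1}(F^{-1}G)^jF^{-1}b$ converge to $A^{-1}b$ for every $x_0$ and every $b$.
   Context: Inequalities between matrices are entrywise. A splitting $A=U-V$ with $U$ nonsingular is regular if $U^{-1}\geq 0$ and $V\geq 0$; it is weak regular of type II if $U^{-1}\geq 0$ and $VU^{-1}\geq 0$. A splitting is convergent if $\rho(U^{-1}V)<1$, where $\rho$ denotes spectral radius. The stationary two-stage method for $Ax=b$ uses outer splitting $A=U-V$ and inner splitting $U=F-G$ with a fixed number $s\ge1$ of inner iterations. *)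

theory Defs
  imports "Jordan_Normal_Form.Spectral_Radius"
begin

definition nonneg_mat :: "real mat \<Rightarrow> bool" where
  "nonneg_mat M = (\<forall>i<dim_row M. \<forall>j<dim_col M. M $$ (i,j) \<ge> 0)"

definition minv :: "real mat \<Rightarrow> real mat" where
  "minv U = (THE B. inverts_mat U B \<and> inverts_mat B U)"

definition rho :: "real mat \<Rightarrow> real" where
  "rho M = spectral_radius (map_mat complex_of_real M)"

fun msum :: "nat \<Rightarrow> (nat \<Rightarrow> real mat) \<Rightarrow> nat \<Rightarrow> real mat" where
  "msum n f 0 = 0\<^sub>m n n"
| "msum n f (Suc k) = msum n f k + f k"

definition regular_splitting :: "nat \<Rightarrow> real mat \<Rightarrow> real mat \<Rightarrow> real mat \<Rightarrow> bool" where
  "regular_splitting n A U V \<longleftrightarrow> A \<in> carrier_mat n n \<and> U \<in> carrier_mat n n \<and> V \<in> carrier_mat n n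
     \<and> A = U - V \<and> invertible_mat U \<and> nonneg_mat (minv U) \<and> nonneg_mat V"

definition weak_regular_splitting_II :: "nat \<Rightarrow> real mat \<Rightarrow> real mat \<Rightarrow> real mat \<Rightarrow> bool" where
  "weak_regular_splitting_II n A U V \<longleftrightarrow> A \<in> carrier_mat n n \<and> U \<in> carrier_mat n n \<and> V \<in> carrier_mat n n
     \<and> A = U - V \<and> invertible_mat U \<and> nonneg_mat (minv U) \<and> nonneg_mat (V * minv U)"

definition convergent_splitting :: "real mat \<Rightarrow> real mat \<Rightarrow> bool" where
  "convergent_splitting U V \<longleftrightarrow> rho (minv U * V) < 1"

definition two_stage_T :: "nat \<Rightarrow> real mat \<Rightarrow> real mat \<Rightarrow> real mat \<Rightarrow> nat \<Rightarrow> real mat" where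
  "two_stage_T n F G V s =
     (minv F * G) ^\<^sub>m s + msum n (\<lambda>j. (minv F * G) ^\<^sub>m j * minv F * V) s"

definition two_stage_c :: "nat \<Rightarrow> real mat \<Rightarrow> real mat \<Rightarrow> nat \<Rightarrow> real vec \<Rightarrow> real vec" where
  "two_stage_c n F G s b = msum n (\<lambda>j. (minv F * G) ^\<^sub>m j * minv F) s *\<^sub>v b"

definition two_stage_iter :: "nat \<Rightarrow> real mat \<Rightarrow> real mat \<Rightarrow> real mat \<Rightarrow> nat \<Rightarrow> real vec \<Rightarrow> real vec \<Rightarrow> nat \<Rightarrow> real vec" where
  "two_stage_iter n F G V s b x0 k =
     ((\<lambda>x. two_stage_T n F G V s *\<^sub>v x + two_stage_c n F G s b) ^^ k) x0"

end

theory Submission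
  imports Defs
begin

(* Let R = G F^-1, B = F (U^-1 V) F^-1 and C = sum_{j<s} (F^-1 G)^j F^-1. Then
   C U = I - (F^-1 G)^s, so C A = I - T_s, and conjugating by F gives
     T' = F T_s F^-1 = R^s + (sum_{j<s} R^j) V F^-1,    I - T' = (I - R^s) (I - B).
   Type II weak regularity gives R >= 0, hence T' >= 0. R is similar to F^-1 G, so it is
   convergent and (I - R)^-1 = F U^-1 is a nonnegative Neumann series; thus B = (F U^-1) (V F^-1)
   is nonnegative, and convergent as a conjugate of U^-1 V. Hence I - R^s and I - B, and with
   them I - T', have nonnegative inverses. A nonnegative M for which I - M has a nonnegative
   inverse N is convergent, because N bounds the partial sums of sum_k M^k. So T' and its
   conjugate T_s are convergent: rho(T_s) < 1, and the iterates tend to the fixed point A^-1 b. *)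

declare minus_carrier_mat[simp]

section \<open>Matrix algebra\<close>

lemma minv_inverse:
  fixes U :: "real mat"
  assumes U: "U \<in> carrier_mat n n" and inv: "invertible_mat U"
  shows "minv U \<in> carrier_mat n n" "U * minv U = 1\<^sub>m n" "minv U * U = 1\<^sub>m n"
proof -
  have inverse_carrier: "B \<in> carrier_mat n n" if "inverts_mat U B" "inverts_mat B U" for B
    using that U unfolding inverts_mat_def
    by (metis carrier_matD carrier_matI index_mult_mat(3) index_one_mat(3))
  obtain B where UB: "inverts_mat U B" and BU: "inverts_mat B U"
    using inv unfolding invertible_mat_def by blast
  have B: "B \<in> carrier_mat n n" using inverse_carrier[OF UB BU] .
  have "minv U = B" unfolding minv_def
  proof (rule the_equality)
    fix B' assume B': "inverts_mat U B' \<and> inverts_mat B' U"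
    then have "B' * U = 1\<^sub>m n" "B' \<in> carrier_mat n n"
      using inverse_carrier unfolding inverts_mat_def by auto
    then have "B' = B' * (U * B)" using UB U unfolding inverts_mat_def by simp
    also have "\<dots> = (B' * U) * B" using \<open>B' \<in> carrier_mat n n\<close> U B by (simp add: assoc_mult_mat)
    finally show "B' = B" using \<open>B' * U = 1\<^sub>m n\<close> B by simp
  qed (use UB BU in blast)
  then show "minv U \<in> carrier_mat n n" "U * minv U = 1\<^sub>m n" "minv U * U = 1\<^sub>m n"
    using B UB BU U unfolding inverts_mat_def by auto
qed

lemma pow_mat_Suc_left:
  fixes M :: "'a :: semiring_1 mat"
  assumes "M \<in> carrier_mat n n"
  shows "M ^\<^sub>m Suc k = M * M ^\<^sub>m k"
proof -
  interpret semiring "ring_mat TYPE('a) n ()" by (rule semiring_mat)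
  show ?thesis
    unfolding pow_mat_ring_pow[OF assms, where b = "()"]
    using nat_pow_Suc2[of M k] assms by (simp add: ring_mat_simps)
qed

lemma pow_mat_add:
  fixes M :: "'a :: semiring_1 mat"
  assumes "M \<in> carrier_mat n n"
  shows "M ^\<^sub>m (a + b) = M ^\<^sub>m a * M ^\<^sub>m b"
proof -
  interpret semiring "ring_mat TYPE('a) n ()" by (rule semiring_mat)
  show ?thesis
    unfolding pow_mat_ring_pow[OF assms, where b = "()"]
    using nat_pow_mult[of M a b] assms by (simp add: ring_mat_simps)
qed

lemma pow_mat_mult:
  fixes M :: "'a :: semiring_1 mat"
  assumes "M \<in> carrier_mat n n"
  shows "M ^\<^sub>m (a * b) = (M ^\<^sub>m a) ^\<^sub>m b"
proof (induction b)
  case (Suc b)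
  have "M ^\<^sub>m (a * Suc b) = M ^\<^sub>m (a * b) * M ^\<^sub>m a"
    using pow_mat_add[OF assms, of "a * b" a] by (simp add: add.commute)
  then show ?case using Suc by simp
qed simp

lemma pow_smult_mat:
  fixes A :: "'a :: comm_ring_1 mat"
  assumes A: "A \<in> carrier_mat n n"
  shows "(c \<cdot>\<^sub>m A) ^\<^sub>m k = c ^ k \<cdot>\<^sub>m A ^\<^sub>m k"
proof (induction k)
  case (Suc k)
  have "(c \<cdot>\<^sub>m A) ^\<^sub>m Suc k = (c ^ k \<cdot>\<^sub>m A ^\<^sub>m k) * (c \<cdot>\<^sub>m A)"
    using Suc by simp
  also have "\<dots> = c ^ Suc k \<cdot>\<^sub>m A ^\<^sub>m Suc k"
    using A by (intro eq_matI) (auto simp: scalar_prod_def sum_distrib_left mult_ac)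
  finally show ?case .
qed (use A in \<open>auto intro!: eq_matI\<close>)

lemma index_mult_mat_sum:
  assumes "A \<in> carrier_mat n m" "B \<in> carrier_mat m p" "i < n" "j < p"
  shows "(A * B) $$ (i,j) = (\<Sum>l<m. A $$ (i,l) * B $$ (l,j))"
  using assms by (auto simp: scalar_prod_def lessThan_atLeast0 intro!: sum.cong)

lemma index_mult_mat_vec_sum:
  assumes "A \<in> carrier_mat n m" "v \<in> carrier_vec m" "i < n"
  shows "(A *\<^sub>v v) $ i = (\<Sum>l<m. A $$ (i,l) * v $ l)"
  using assms by (auto simp: scalar_prod_def lessThan_atLeast0 intro!: sum.cong)

lemma msum_carrier: "(\<And>j. f j \<in> carrier_mat n n) \<Longrightarrow> msum n f k \<in> carrier_mat n n"
  by (induction k) auto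

lemma msum_index:
  assumes "\<And>j. f j \<in> carrier_mat n n" "i < n" "j < n"
  shows "msum n f k $$ (i,j) = (\<Sum>l<k. f l $$ (i,j))"
proof (induction k)
  case (Suc k)
  then show ?case using assms carrier_matD[OF assms(1)] carrier_matD[OF msum_carrier[of f n k]] by simp
qed (use assms in simp)

lemma msum_mult_left:
  assumes "L \<in> carrier_mat n n" "\<And>j. f j \<in> carrier_mat n n"
  shows "msum n (\<lambda>j. L * f j) k = L * msum n f k"
  by (induction k) (use assms in \<open>simp_all add: mult_add_distrib_mat[OF assms(1) msum_carrier[OF assms(2)] assms(2)]\<close>)

lemma msum_mult_right:
  assumes "L \<in> carrier_mat n n" "\<And>j. f j \<in> carrier_mat n n"
  shows "msum n (\<lambda>j. f j * L) k = msum n f k * L"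
  by (induction k) (use assms in \<open>simp_all add: add_mult_distrib_mat[OF msum_carrier[OF assms(2)] assms(2,1)]\<close>)

lemma msum_pow_mult_one_minus:
  fixes M :: "real mat"
  assumes M: "M \<in> carrier_mat n n"
  shows "msum n (\<lambda>j. M ^\<^sub>m j) k * (1\<^sub>m n - M) = 1\<^sub>m n - M ^\<^sub>m k"
proof (induction k)
  case 0
  then show ?case using M by (auto intro!: eq_matI)
next
  case (Suc k)
  have S: "msum n (\<lambda>j. M ^\<^sub>m j) k \<in> carrier_mat n n" using M by (simp add: msum_carrier)
  have "msum n (\<lambda>j. M ^\<^sub>m j) (Suc k) * (1\<^sub>m n - M)
      = msum n (\<lambda>j. M ^\<^sub>m j) k * (1\<^sub>m n - M) + M ^\<^sub>m k * (1\<^sub>m n - M)"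
    unfolding msum.simps by (rule add_mult_distrib_mat[OF S]) (use M in auto)
  also have "\<dots> = (1\<^sub>m n - M ^\<^sub>m k) + (M ^\<^sub>m k - M ^\<^sub>m k * M)"
    using M Suc by (simp add: mult_minus_distrib_mat[OF pow_carrier_mat[OF M] one_carrier_mat M])
  also have "\<dots> = 1\<^sub>m n - M ^\<^sub>m Suc k"
    using M by (intro eq_matI) auto
  finally show ?case .
qed

lemma mult_inverse_cancel_left:
  fixes S S' X :: "'a :: semiring_1 mat"
  assumes "S \<in> carrier_mat n n" "S' \<in> carrier_mat n n" "S * S' = 1\<^sub>m n" "X \<in> carrier_mat n m"
  shows "S * (S' * X) = X"
  using assms by (simp add: assoc_mult_mat[symmetric, of S n n S' n X m])

lemma conjugate_one_minus:
  fixes S S' X :: "'a :: ring_1 mat"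
  assumes "S \<in> carrier_mat n n" "S' \<in> carrier_mat n n" "S * S' = 1\<^sub>m n" "X \<in> carrier_mat n n"
  shows "S * (1\<^sub>m n - X) * S' = 1\<^sub>m n - S * X * S'"
proof -
  have "S * (1\<^sub>m n - X) = S - S * X"
    using assms by (simp add: mult_minus_distrib_mat[OF assms(1) one_carrier_mat assms(4)])
  then show ?thesis
    using assms by (simp add: minus_mult_distrib_mat[OF assms(1) mult_carrier_mat[OF assms(1,4)] assms(2)])
qed

lemma conjugate_mult:
  fixes S S' X Y :: "'a :: semiring_1 mat"
  assumes "S \<in> carrier_mat n n" "S' \<in> carrier_mat n n" "S' * S = 1\<^sub>m n"
    "X \<in> carrier_mat n n" "Y \<in> carrier_mat n n"
  shows "S * (X * Y) * S' = (S * X * S') * (S * Y * S')"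
  using assms by (simp add: assoc_mult_mat[of _ n n _ n _ n] mult_carrier_mat[of _ n n _ n]
      mult_inverse_cancel_left[OF assms(2,1,3), of _ n])

lemma similar_mat_conjugate:
  assumes "S \<in> carrier_mat n n" "S' \<in> carrier_mat n n" "S * S' = 1\<^sub>m n" "S' * S = 1\<^sub>m n"
    "X \<in> carrier_mat n n"
  shows "similar_mat (S * X * S') X"
  using assms by (intro similar_matI[where n = n and P = S and Q = S']) auto

section \<open>Nonnegative matrices\<close>

lemma nonneg_mat_mult:
  assumes "dim_col A = dim_row B" "nonneg_mat A" "nonneg_mat B"
  shows "nonneg_mat (A * B)"
  using assms unfolding nonneg_mat_def
  by (auto simp: scalar_prod_def intro!: sum_nonneg mult_nonneg_nonneg)

lemma nonneg_mat_add:
  assumes "A \<in> carrier_mat n m" "B \<in> carrier_mat n m" "nonneg_mat A" "nonneg_mat B"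
  shows "nonneg_mat (A + B)"
  using assms unfolding nonneg_mat_def by auto

lemma nonneg_mat_pow:
  assumes "A \<in> carrier_mat n n" "nonneg_mat A"
  shows "nonneg_mat (A ^\<^sub>m k)"
proof (induction k)
  case 0
  then show ?case unfolding nonneg_mat_def by simp
next
  case (Suc k)
  then show ?case using assms by (simp add: nonneg_mat_mult)
qed

lemma nonneg_mat_msum:
  assumes "\<And>j. f j \<in> carrier_mat n n" "\<And>j. nonneg_mat (f j)"
  shows "nonneg_mat (msum n f k)"
proof (induction k)
  case 0
  then show ?case unfolding nonneg_mat_def by simp
next
  case (Suc k)
  then show ?case using assms by (simp add: nonneg_mat_add[of _ n n] msum_carrier)
qed

section \<open>Convergent matrices\<close>

definition mat_seq_tendsto_zero :: "nat \<Rightarrow> (nat \<Rightarrow> 'a :: real_normed_field mat) \<Rightarrow> bool" where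
  "mat_seq_tendsto_zero n X \<longleftrightarrow> (\<forall>i<n. \<forall>j<n. (\<lambda>k. X k $$ (i,j)) \<longlonglongrightarrow> 0)"

definition convergent_mat :: "nat \<Rightarrow> real mat \<Rightarrow> bool" where
  "convergent_mat n M \<longleftrightarrow> mat_seq_tendsto_zero n (\<lambda>k. M ^\<^sub>m k)"

lemma mat_seq_tendsto_zero_mult_left:
  assumes "C \<in> carrier_mat n n" "\<And>k. X k \<in> carrier_mat n n" "mat_seq_tendsto_zero n X"
  shows "mat_seq_tendsto_zero n (\<lambda>k. C * X k)"
  using assms unfolding mat_seq_tendsto_zero_def
  by (auto simp: index_mult_mat_sum[OF assms(1,2)] intro!: tendsto_null_sum tendsto_mult_right_zero)

lemma mat_seq_tendsto_zero_mult_right: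
  assumes "C \<in> carrier_mat n n" "\<And>k. X k \<in> carrier_mat n n" "mat_seq_tendsto_zero n X"
  shows "mat_seq_tendsto_zero n (\<lambda>k. X k * C)"
  using assms unfolding mat_seq_tendsto_zero_def
  by (auto simp: index_mult_mat_sum[OF assms(2,1)] intro!: tendsto_null_sum tendsto_mult_left_zero)

lemma mat_seq_tendsto_zero_mult_vec:
  assumes "\<And>k. X k \<in> carrier_mat n n" "mat_seq_tendsto_zero n X" "v \<in> carrier_vec n" "i < n"
  shows "(\<lambda>k. (X k *\<^sub>v v) $ i) \<longlonglongrightarrow> 0"
  using assms unfolding mat_seq_tendsto_zero_def
  by (auto simp: index_mult_mat_vec_sum[OF assms(1,3)] intro!: tendsto_null_sum tendsto_mult_left_zero)

lemma convergent_mat_similar: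
  assumes "convergent_mat n B" "similar_mat A B" "A \<in> carrier_mat n n"
  shows "convergent_mat n A"
proof -
  obtain P Q where wit: "similar_mat_wit A B P Q"
    using assms(2) unfolding similar_mat_def by blast
  note carriers = similar_mat_witD2[OF assms(3) wit]
  have "mat_seq_tendsto_zero n (\<lambda>k. P * B ^\<^sub>m k * Q)"
    using carriers assms(1) unfolding convergent_mat_def
    by (intro mat_seq_tendsto_zero_mult_right mat_seq_tendsto_zero_mult_left) auto
  then show ?thesis
    unfolding convergent_mat_def similar_mat_wit_pow_id[OF wit] .
qed

lemma convergent_mat_pow:
  assumes "M \<in> carrier_mat n n" "convergent_mat n M" "s \<ge> 1"
  shows "convergent_mat n (M ^\<^sub>m s)"
  unfolding convergent_mat_def mat_seq_tendsto_zero_def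
proof (intro allI impI)
  fix i j assume "i < n" "j < n"
  then have "(\<lambda>k. (M ^\<^sub>m k) $$ (i,j)) \<longlonglongrightarrow> 0"
    using assms(2) unfolding convergent_mat_def mat_seq_tendsto_zero_def by blast
  moreover have "strict_mono (\<lambda>k. s * k)"
    using assms(3) by (intro strict_monoI) auto
  ultimately have "(\<lambda>k. (M ^\<^sub>m (s * k)) $$ (i,j)) \<longlonglongrightarrow> 0"
    using LIMSEQ_subseq_LIMSEQ unfolding comp_def by blast
  then show "(\<lambda>k. ((M ^\<^sub>m s) ^\<^sub>m k) $$ (i, j)) \<longlonglongrightarrow> 0"
    by (simp add: pow_mat_mult[OF assms(1)])
qed

lemma convergent_mat_fixed_vec_zero:
  assumes M: "M \<in> carrier_mat n n" and "convergent_mat n M"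
    and v: "v \<in> carrier_vec n" and fixed: "M *\<^sub>v v = v"
  shows "v = 0\<^sub>v n"
proof (rule eq_vecI)
  have pow_fixed: "M ^\<^sub>m k *\<^sub>v v = v" for k
  proof (induction k)
    case (Suc k)
    then show ?case
      using assoc_mult_mat_vec[OF pow_carrier_mat[OF M] M v, of k] fixed by simp
  qed (use v M in simp)
  fix i assume "i < dim_vec (0\<^sub>v n :: real vec)"
  then have i: "i < n" by simp
  have "(\<lambda>k. (M ^\<^sub>m k *\<^sub>v v) $ i) \<longlonglongrightarrow> 0"
    using assms i unfolding convergent_mat_def by (intro mat_seq_tendsto_zero_mult_vec) auto
  then show "v $ i = 0\<^sub>v n $ i"
    using i by (simp add: pow_fixed LIMSEQ_const_iff)
qed (use v in simp)

lemma affine_iteration_tendsto: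
  fixes T :: "real mat"
  assumes T: "T \<in> carrier_mat n n" and "convergent_mat n T"
    and x: "x \<in> carrier_vec n" and fixed: "T *\<^sub>v x + c = x"
    and x0: "x0 \<in> carrier_vec n" and i: "i < n"
  shows "(\<lambda>k. ((\<lambda>y. T *\<^sub>v y + c) ^^ k) x0 $ i) \<longlonglongrightarrow> x $ i"
proof -
  have c: "c \<in> carrier_vec n"
    using arg_cong[where f = dim_vec, OF fixed] x by (auto intro: carrier_vecI)
  define d where "d = x0 - x"
  have d: "d \<in> carrier_vec n" unfolding d_def using x0 x by simp
  have iterate: "((\<lambda>y. T *\<^sub>v y + c) ^^ k) x0 = T ^\<^sub>m k *\<^sub>v d + x" for k
  proof (induction k)
    case 0
    show ?case unfolding d_def using x0 x T by (intro eq_vecI) auto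
  next
    case (Suc k)
    have Tkd: "T ^\<^sub>m k *\<^sub>v d \<in> carrier_vec n" using mult_mat_vec_carrier[OF pow_carrier_mat[OF T] d] .
    have "((\<lambda>y. T *\<^sub>v y + c) ^^ Suc k) x0 = T *\<^sub>v (T ^\<^sub>m k *\<^sub>v d + x) + c"
      using Suc by simp
    also have "\<dots> = T *\<^sub>v (T ^\<^sub>m k *\<^sub>v d) + (T *\<^sub>v x + c)"
      unfolding mult_add_distrib_mat_vec[OF T Tkd x]
      by (rule assoc_add_vec) (use T Tkd x c in auto)
    also have "T *\<^sub>v (T ^\<^sub>m k *\<^sub>v d) = T ^\<^sub>m Suc k *\<^sub>v d"
      unfolding pow_mat_Suc_left[OF T] by (rule assoc_mult_mat_vec[symmetric]) (use T d in auto)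
    finally show ?case unfolding fixed .
  qed
  have "(\<lambda>k. (T ^\<^sub>m k *\<^sub>v d) $ i) \<longlonglongrightarrow> 0"
    using assms d unfolding convergent_mat_def by (intro mat_seq_tendsto_zero_mult_vec) auto
  then have "(\<lambda>k. (T ^\<^sub>m k *\<^sub>v d) $ i + x $ i) \<longlonglongrightarrow> 0 + x $ i"
    by (intro tendsto_add tendsto_const)
  moreover have "((\<lambda>y. T *\<^sub>v y + c) ^^ k) x0 $ i = (T ^\<^sub>m k *\<^sub>v d) $ i + x $ i" for k
    unfolding iterate using i x T d by simp
  ultimately show ?thesis by simp
qed

lemma left_inverse_one_minus_expansion:
  fixes X M :: "real mat"
  assumes X: "X \<in> carrier_mat n n" and M: "M \<in> carrier_mat n n"
    and inv: "X * (1\<^sub>m n - M) = 1\<^sub>m n"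
  shows "X = msum n (\<lambda>k. M ^\<^sub>m k) m + X * M ^\<^sub>m m"
proof (induction m)
  case 0
  then show ?case using X M by simp
next
  case (Suc m)
  have diff: "X - X * M = 1\<^sub>m n"
    using inv X M by (simp add: mult_minus_distrib_mat[OF X one_carrier_mat M])
  have "X $$ (i,j) - (X * M) $$ (i,j) = 1\<^sub>m n $$ (i,j)" if "i < n" "j < n" for i j
    using arg_cong[where f = "\<lambda>Y. Y $$ (i,j)", OF diff] that X M by simp
  then have X_eq: "X = 1\<^sub>m n + X * M"
    using X M by (intro eq_matI) (auto simp: diff_eq_eq)
  have Mm: "M ^\<^sub>m m \<in> carrier_mat n n" using M by simp
  have "X * M ^\<^sub>m m = (1\<^sub>m n + X * M) * M ^\<^sub>m m"
    by (subst X_eq) (rule refl)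
  also have "\<dots> = M ^\<^sub>m m + X * (M * M ^\<^sub>m m)"
    using Mm by (simp add: add_mult_distrib_mat[OF one_carrier_mat mult_carrier_mat[OF X M] Mm]
        assoc_mult_mat[OF X M Mm] left_mult_one_mat[OF Mm])
  finally have step: "X * M ^\<^sub>m m = M ^\<^sub>m m + X * M ^\<^sub>m Suc m"
    by (simp only: pow_mat_Suc_left[OF M])
  have "X = msum n (\<lambda>k. M ^\<^sub>m k) m + (M ^\<^sub>m m + X * M ^\<^sub>m Suc m)"
    using Suc.IH unfolding step .
  also have "\<dots> = msum n (\<lambda>k. M ^\<^sub>m k) (Suc m) + X * M ^\<^sub>m Suc m"
    unfolding msum.simps
    by (rule assoc_add_mat[symmetric]) (use X M msum_carrier[of "\<lambda>k. M ^\<^sub>m k" n m] in auto)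
  finally show ?case .
qed

lemma left_inverse_one_minus_expansion_index:
  fixes X M :: "real mat"
  assumes X: "X \<in> carrier_mat n n" and M: "M \<in> carrier_mat n n"
    and inv: "X * (1\<^sub>m n - M) = 1\<^sub>m n" and ij: "i < n" "j < n"
  shows "X $$ (i,j) = (\<Sum>k<m. (M ^\<^sub>m k) $$ (i,j)) + (X * M ^\<^sub>m m) $$ (i,j)"
  using arg_cong[where f = "\<lambda>Y. Y $$ (i,j)", OF left_inverse_one_minus_expansion[OF X M inv, of m]]
    ij X M msum_carrier[of "\<lambda>k. M ^\<^sub>m k" n m] msum_index[of "\<lambda>k. M ^\<^sub>m k" n i j m]
  by simp

lemma nonneg_mat_left_inverse_one_minus:
  fixes X M :: "real mat"
  assumes X: "X \<in> carrier_mat n n" and M: "M \<in> carrier_mat n n"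
    and inv: "X * (1\<^sub>m n - M) = 1\<^sub>m n" and "nonneg_mat M" "convergent_mat n M"
  shows "nonneg_mat X"
  unfolding nonneg_mat_def
proof (intro allI impI)
  fix i j assume "i < dim_row X" "j < dim_col X"
  then have ij: "i < n" "j < n" using X by auto
  have "mat_seq_tendsto_zero n (\<lambda>m. X * M ^\<^sub>m m)"
    using assms unfolding convergent_mat_def by (intro mat_seq_tendsto_zero_mult_left) auto
  then have "(\<lambda>m. (X * M ^\<^sub>m m) $$ (i,j)) \<longlonglongrightarrow> 0"
    using ij unfolding mat_seq_tendsto_zero_def by blast
  moreover have "(X * M ^\<^sub>m m) $$ (i,j) \<le> X $$ (i,j)" for m
  proof -
    have "0 \<le> (\<Sum>k<m. (M ^\<^sub>m k) $$ (i,j))"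
      using nonneg_mat_pow[OF M \<open>nonneg_mat M\<close>] M ij unfolding nonneg_mat_def
      by (intro sum_nonneg) auto
    then show ?thesis
      using left_inverse_one_minus_expansion_index[OF X M inv ij, of m] by linarith
  qed
  ultimately show "0 \<le> X $$ (i,j)"
    using LIMSEQ_le_const2 by blast
qed

lemma convergent_mat_if_nonneg_left_inverse_one_minus:
  fixes N M :: "real mat"
  assumes N: "N \<in> carrier_mat n n" and M: "M \<in> carrier_mat n n"
    and inv: "N * (1\<^sub>m n - M) = 1\<^sub>m n" and nonneg: "nonneg_mat M" "nonneg_mat N"
  shows "convergent_mat n M"
  unfolding convergent_mat_def mat_seq_tendsto_zero_def
proof (intro allI impI)
  fix i j assume ij: "i < n" "j < n"
  have M_pow_nonneg: "0 \<le> (M ^\<^sub>m k) $$ (i,j)" for k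
    using nonneg_mat_pow[OF M nonneg(1)] M ij unfolding nonneg_mat_def by auto
  have "(\<Sum>k<m. (M ^\<^sub>m k) $$ (i,j)) \<le> N $$ (i,j)" for m
  proof -
    have "nonneg_mat (N * M ^\<^sub>m m)"
      using N M nonneg by (intro nonneg_mat_mult nonneg_mat_pow) auto
    then have "0 \<le> (N * M ^\<^sub>m m) $$ (i,j)"
      using N M ij unfolding nonneg_mat_def by auto
    then show ?thesis
      using left_inverse_one_minus_expansion_index[OF N M inv ij, of m] by linarith
  qed
  then have "summable (\<lambda>k. (M ^\<^sub>m k) $$ (i,j))"
    by (rule summableI_nonneg_bounded[OF M_pow_nonneg])
  then show "(\<lambda>k. (M ^\<^sub>m k) $$ (i,j)) \<longlonglongrightarrow> 0"
    by (rule summable_LIMSEQ_zero)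
qed

lemma left_inverse_one_minus_exists:
  fixes M :: "real mat"
  assumes M: "M \<in> carrier_mat n n" and "convergent_mat n M"
  shows "\<exists>X \<in> carrier_mat n n. X * (1\<^sub>m n - M) = 1\<^sub>m n"
proof -
  have IM: "1\<^sub>m n - M \<in> carrier_mat n n" using M by simp
  have "det (1\<^sub>m n - M) \<noteq> 0"
  proof
    assume "det (1\<^sub>m n - M) = 0"
    then obtain v where v: "v \<in> carrier_vec n" "v \<noteq> 0\<^sub>v n" and "(1\<^sub>m n - M) *\<^sub>v v = 0\<^sub>v n"
      using det_0_iff_vec_prod_zero[OF IM] by blast
    then have "v - M *\<^sub>v v = 0\<^sub>v n"
      using M by (simp add: minus_mult_distrib_mat_vec[OF one_carrier_mat M v(1)])
    then have "(v - M *\<^sub>v v) $ i = 0" if "i < n" for i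
      using that by (simp only:) simp
    then have "M *\<^sub>v v = v"
      using M v(1) by (intro eq_vecI) auto
    with v convergent_mat_fixed_vec_zero[OF assms] show False by blast
  qed
  from det_non_zero_imp_unit[OF IM this, of "()"] show ?thesis
    unfolding Units_def ring_mat_def by auto
qed

lemma nonneg_left_inverse_one_minus_exists:
  fixes M :: "real mat"
  assumes "M \<in> carrier_mat n n" "nonneg_mat M" "convergent_mat n M"
  shows "\<exists>X \<in> carrier_mat n n. nonneg_mat X \<and> X * (1\<^sub>m n - M) = 1\<^sub>m n"
  using left_inverse_one_minus_exists[OF assms(1,3)] nonneg_mat_left_inverse_one_minus assms by blast

lemma convergent_mat_if_nonneg_factorization:
  fixes T Q B :: "real mat"
  assumes carriers: "T \<in> carrier_mat n n" "Q \<in> carrier_mat n n" "B \<in> carrier_mat n n"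
    and "nonneg_mat T" and factor: "1\<^sub>m n - T = (1\<^sub>m n - Q) * (1\<^sub>m n - B)"
    and "nonneg_mat Q" "convergent_mat n Q" "nonneg_mat B" "convergent_mat n B"
  shows "convergent_mat n T"
proof -
  obtain X where X: "X \<in> carrier_mat n n" "nonneg_mat X" "X * (1\<^sub>m n - Q) = 1\<^sub>m n"
    using nonneg_left_inverse_one_minus_exists assms by blast
  obtain Y where Y: "Y \<in> carrier_mat n n" "nonneg_mat Y" "Y * (1\<^sub>m n - B) = 1\<^sub>m n"
    using nonneg_left_inverse_one_minus_exists assms by blast
  have "(Y * X) * (1\<^sub>m n - T) = Y * ((X * (1\<^sub>m n - Q)) * (1\<^sub>m n - B))"
    unfolding factor using carriers X(1) Y(1)
    by (simp add: assoc_mult_mat[of _ n n _ n _ n] mult_carrier_mat[of _ n n _ n])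
  also have "\<dots> = 1\<^sub>m n"
    using X Y carriers by simp
  finally show ?thesis
    using carriers X Y assms(4)
    by (intro convergent_mat_if_nonneg_left_inverse_one_minus[of "Y * X"] nonneg_mat_mult) auto
qed

section \<open>Convergence and spectral radius\<close>

lemma spectral_radius_nonneg:
  assumes "A \<in> carrier_mat n n" "n > 0"
  shows "0 \<le> spectral_radius A"
  using spectral_radius_mem_max(1)[OF assms] by auto

lemma spectral_radius_smult_inverse_less_1:
  fixes A :: "complex mat"
  assumes A: "A \<in> carrier_mat n n" and "n > 0" and less: "spectral_radius A < r"
  shows "spectral_radius (complex_of_real (1 / r) \<cdot>\<^sub>m A) < 1"
proof -
  let ?N = "complex_of_real (1 / r) \<cdot>\<^sub>m A"
  have N: "?N \<in> carrier_mat n n" using A by simp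
  have "r > 0"
    using spectral_radius_nonneg[OF A \<open>n > 0\<close>] less by linarith
  obtain \<mu> where "\<mu> \<in> spectrum ?N" and sr: "spectral_radius ?N = norm \<mu>"
    using spectral_radius_mem_max(1)[OF N \<open>n > 0\<close>] by auto
  then obtain v where v: "v \<in> carrier_vec n" "v \<noteq> 0\<^sub>v n" "?N *\<^sub>v v = \<mu> \<cdot>\<^sub>v v"
    using N unfolding spectrum_def eigenvalue_def eigenvector_def by auto
  have "A *\<^sub>v v = (complex_of_real r * \<mu>) \<cdot>\<^sub>v v"
  proof (rule eq_vecI)
    fix i assume "i < dim_vec ((complex_of_real r * \<mu>) \<cdot>\<^sub>v v)"
    then have i: "i < n" using v by simp
    have "complex_of_real (1 / r) * (A *\<^sub>v v) $ i = \<mu> * v $ i"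
      using arg_cong[where f = "\<lambda>w. w $ i", OF v(3)] i A v
      by (simp add: scalar_prod_def sum_distrib_left mult_ac)
    then show "(A *\<^sub>v v) $ i = ((complex_of_real r * \<mu>) \<cdot>\<^sub>v v) $ i"
      using i v \<open>r > 0\<close> by (simp add: field_simps)
  qed (use A v in simp)
  then have "norm (complex_of_real r * \<mu>) \<in> norm ` spectrum A"
    using A v unfolding spectrum_def eigenvalue_def eigenvector_def by auto
  then have "r * norm \<mu> < r"
    using spectral_radius_mem_max(2)[OF A \<open>n > 0\<close>] less \<open>r > 0\<close> by (force simp: norm_mult)
  then show ?thesis
    using sr \<open>r > 0\<close> by simp
qed

lemma mat_pow_index_geometric_bound:
  fixes M :: "real mat"
  assumes M: "M \<in> carrier_mat n n" and "n > 0"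
    and less: "spectral_radius (map_mat complex_of_real M) < r"
  shows "\<exists>c. \<forall>k i j. i < n \<longrightarrow> j < n \<longrightarrow> \<bar>(M ^\<^sub>m k) $$ (i,j)\<bar> \<le> c * r ^ k"
proof -
  define Mc where "Mc = map_mat complex_of_real M"
  have Mc: "Mc \<in> carrier_mat n n" unfolding Mc_def using M by simp
  have "r > 0"
    using spectral_radius_nonneg[OF Mc \<open>n > 0\<close>] less unfolding Mc_def by linarith
  have "spectral_radius (complex_of_real (1 / r) \<cdot>\<^sub>m Mc) < 1"
    using spectral_radius_smult_inverse_less_1[OF Mc \<open>n > 0\<close>] less unfolding Mc_def by simp
  then obtain c where c: "\<And>k. norm_bound ((complex_of_real (1 / r) \<cdot>\<^sub>m Mc) ^\<^sub>m k) c"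
    using spectral_radius_jnf_norm_bound_less_1_upper_triangular[OF smult_carrier_mat[OF Mc]] by blast
  have "\<bar>(M ^\<^sub>m k) $$ (i,j)\<bar> \<le> c * r ^ k" if ij: "i < n" "j < n" for k i j
  proof -
    have "((complex_of_real (1 / r) \<cdot>\<^sub>m Mc) ^\<^sub>m k) $$ (i,j)
        = complex_of_real (1 / r) ^ k * (Mc ^\<^sub>m k) $$ (i,j)"
      unfolding pow_smult_mat[OF Mc] using ij Mc by simp
    also have "Mc ^\<^sub>m k = map_mat complex_of_real (M ^\<^sub>m k)"
      unfolding Mc_def by (rule of_real_hom.mat_hom_pow[OF M, symmetric])
    finally have entry: "((complex_of_real (1 / r) \<cdot>\<^sub>m Mc) ^\<^sub>m k) $$ (i,j)
        = complex_of_real ((1 / r) ^ k * (M ^\<^sub>m k) $$ (i,j))"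
      using ij M by simp
    have "norm (((complex_of_real (1 / r) \<cdot>\<^sub>m Mc) ^\<^sub>m k) $$ (i,j)) \<le> c"
      using c[of k] ij Mc unfolding norm_bound_def by simp
    then have "(1 / r) ^ k * \<bar>(M ^\<^sub>m k) $$ (i,j)\<bar> \<le> c"
      unfolding entry norm_of_real using \<open>r > 0\<close> by (simp add: abs_mult)
    then have "r ^ k * ((1 / r) ^ k * \<bar>(M ^\<^sub>m k) $$ (i,j)\<bar>) \<le> r ^ k * c"
      using \<open>r > 0\<close> by (intro mult_left_mono) auto
    then show ?thesis
      using \<open>r > 0\<close> by (simp add: power_one_over mult.commute)
  qed
  then show ?thesis by blast
qed

lemma convergent_mat_if_rho_less_1:
  fixes M :: "real mat"
  assumes M: "M \<in> carrier_mat n n" and "rho M < 1"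
  shows "convergent_mat n M"
proof (cases "n = 0")
  case True
  then show ?thesis unfolding convergent_mat_def mat_seq_tendsto_zero_def by simp
next
  case False
  define r where "r = (1 + rho M) / 2"
  have "0 \<le> rho M"
    unfolding rho_def using spectral_radius_nonneg M False by simp
  then have r: "r < 1" "rho M < r"
    using \<open>rho M < 1\<close> unfolding r_def by auto
  then obtain c where bound: "\<forall>k i j. i < n \<longrightarrow> j < n \<longrightarrow> \<bar>(M ^\<^sub>m k) $$ (i,j)\<bar> \<le> c * r ^ k"
    using mat_pow_index_geometric_bound[OF M _ r(2)[unfolded rho_def]] False by blast
  have "(\<lambda>k. c * r ^ k) \<longlonglongrightarrow> 0"
    using r \<open>0 \<le> rho M\<close> unfolding r_def by (intro tendsto_mult_right_zero LIMSEQ_power_zero) auto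
  show ?thesis
    unfolding convergent_mat_def mat_seq_tendsto_zero_def
  proof (intro allI impI)
    fix i j assume "i < n" "j < n"
    then have "norm ((M ^\<^sub>m k) $$ (i,j)) \<le> norm (c * r ^ k) * 1" for k
      using order_trans[OF bound[rule_format] abs_ge_self] by simp
    then show "(\<lambda>k. (M ^\<^sub>m k) $$ (i,j)) \<longlonglongrightarrow> 0"
      by (intro tendsto_0_le[OF \<open>(\<lambda>k. c * r ^ k) \<longlonglongrightarrow> 0\<close>] always_eventually allI)
  qed
qed

lemma rho_less_1_if_convergent_mat:
  fixes M :: "real mat"
  assumes M: "M \<in> carrier_mat n n" and "n > 0" and "convergent_mat n M"
  shows "rho M < 1"
proof (rule ccontr)
  define Mc where "Mc = map_mat complex_of_real M"
  have Mc: "Mc \<in> carrier_mat n n" unfolding Mc_def using M by simp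
  have "mat_seq_tendsto_zero n (\<lambda>k. Mc ^\<^sub>m k)"
  proof -
    have "Mc ^\<^sub>m k = map_mat complex_of_real (M ^\<^sub>m k)" for k
      unfolding Mc_def by (rule of_real_hom.mat_hom_pow[OF M, symmetric])
    then show ?thesis
      using assms(3) M unfolding convergent_mat_def mat_seq_tendsto_zero_def
      by (auto intro: tendsto_of_real[where a = 0, simplified])
  qed
  obtain \<mu> where "\<mu> \<in> spectrum Mc" and sr: "spectral_radius Mc = norm \<mu>"
    using spectral_radius_mem_max(1)[OF Mc \<open>n > 0\<close>] by auto
  then obtain v where ev: "eigenvector Mc v \<mu>"
    unfolding spectrum_def eigenvalue_def by auto
  then have v: "v \<in> carrier_vec n" "v \<noteq> 0\<^sub>v n"
    using Mc unfolding eigenvector_def by auto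
  then obtain i where i: "i < n" "v $ i \<noteq> 0"
    by (metis eq_vecI carrier_vecD index_zero_vec)
  have "(\<lambda>k. (Mc ^\<^sub>m k *\<^sub>v v) $ i) \<longlonglongrightarrow> 0"
    using Mc v i \<open>mat_seq_tendsto_zero n (\<lambda>k. Mc ^\<^sub>m k)\<close> by (intro mat_seq_tendsto_zero_mult_vec) auto
  then have "(\<lambda>k. norm (\<mu> ^ k * v $ i)) \<longlonglongrightarrow> 0"
    using v i by (simp add: eigenvector_pow[OF Mc ev] tendsto_norm_zero)
  moreover assume "\<not> rho M < 1"
  then have "norm (v $ i) \<le> norm (\<mu> ^ k * v $ i)" for k
    using sr unfolding rho_def Mc_def[symmetric]
    by (simp add: norm_mult norm_power mult_le_cancel_right1 one_le_power)
  ultimately have "norm (v $ i) \<le> 0"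
    by (intro LIMSEQ_le_const) auto
  with i show False by simp
qed

section \<open>The stationary two-stage method\<close>

definition two_stage_C :: "nat \<Rightarrow> real mat \<Rightarrow> real mat \<Rightarrow> nat \<Rightarrow> real mat" where
  "two_stage_C n F G s = msum n (\<lambda>j. (minv F * G) ^\<^sub>m j * minv F) s"

locale two_stage_splitting =
  fixes n :: nat and A U V F G :: "real mat"
  assumes outer: "regular_splitting n A U V"
    and inner: "weak_regular_splitting_II n U F G"
begin

lemma carrier [simp]:
  "A \<in> carrier_mat n n" "U \<in> carrier_mat n n" "V \<in> carrier_mat n n"
  "F \<in> carrier_mat n n" "G \<in> carrier_mat n n"
  "minv U \<in> carrier_mat n n" "minv F \<in> carrier_mat n n"
  using outer inner minv_inverse(1)
  unfolding regular_splitting_def weak_regular_splitting_II_def by auto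

lemmas carrier_dims [simp] = carrier[THEN carrier_matD(1)] carrier[THEN carrier_matD(2)]

lemma inverse [simp]:
  "U * minv U = 1\<^sub>m n" "minv U * U = 1\<^sub>m n" "F * minv F = 1\<^sub>m n" "minv F * F = 1\<^sub>m n"
  using outer inner minv_inverse(2,3)
  unfolding regular_splitting_def weak_regular_splitting_II_def by auto

lemma nonneg:
  "nonneg_mat (minv U)" "nonneg_mat V" "nonneg_mat (minv F)" "nonneg_mat (G * minv F)"
  using outer inner unfolding regular_splitting_def weak_regular_splitting_II_def by auto

lemma splitting: "A = U - V" "U = F - G"
  using outer inner unfolding regular_splitting_def weak_regular_splitting_II_def by auto

(* Dimension-instantiated forms that let the simplifier reassociate products of n x n
   matrices and cancel F, U against their inverses. *)
lemmas square_simps [simp] =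
  assoc_mult_mat[of _ n n _ n _ n] mult_carrier_mat[of _ n n _ n]
  mult_inverse_cancel_left[OF carrier(6,2) inverse(2), of _ n]
  mult_inverse_cancel_left[OF carrier(2,6) inverse(1), of _ n]
  mult_inverse_cancel_left[OF carrier(7,4) inverse(4), of _ n]
  mult_inverse_cancel_left[OF carrier(4,7) inverse(3), of _ n]

lemma two_stage_C_carrier [simp]: "two_stage_C n F G s \<in> carrier_mat n n"
  unfolding two_stage_C_def by (simp add: msum_carrier)

lemma two_stage_T_eq: "two_stage_T n F G V s = (minv F * G) ^\<^sub>m s + two_stage_C n F G s * V"
  unfolding two_stage_T_def two_stage_C_def by (simp add: msum_mult_right msum_carrier)

lemma two_stage_T_carrier [simp]: "two_stage_T n F G V s \<in> carrier_mat n n"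
  unfolding two_stage_T_eq by simp

lemmas two_stage_dims [simp] =
  two_stage_C_carrier[THEN carrier_matD(1)] two_stage_C_carrier[THEN carrier_matD(2)]
  two_stage_T_carrier[THEN carrier_matD(1)] two_stage_T_carrier[THEN carrier_matD(2)]

lemma two_stage_C_mult_U: "two_stage_C n F G s * U = 1\<^sub>m n - (minv F * G) ^\<^sub>m s"
proof -
  have "minv F * U = 1\<^sub>m n - minv F * G"
    unfolding splitting(2) by (simp add: mult_minus_distrib_mat[OF carrier(7,4,5)])
  moreover have "two_stage_C n F G s = msum n (\<lambda>j. (minv F * G) ^\<^sub>m j) s * minv F"
    unfolding two_stage_C_def by (simp add: msum_mult_right)
  ultimately show ?thesis
    by (simp add: msum_carrier msum_pow_mult_one_minus)
qed

lemma two_stage_C_mult_A: "two_stage_C n F G s * A = 1\<^sub>m n - two_stage_T n F G V s"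
proof -
  have "two_stage_C n F G s * A = (1\<^sub>m n - (minv F * G) ^\<^sub>m s) - two_stage_C n F G s * V"
    unfolding splitting(1) two_stage_C_mult_U[symmetric]
    by (rule mult_minus_distrib_mat[of _ n n _ n]) auto
  then show ?thesis
    unfolding two_stage_T_eq by (intro eq_matI) auto
qed

lemma two_stage_fixpoint:
  assumes "invertible_mat A" "b \<in> carrier_vec n"
  shows "two_stage_T n F G V s *\<^sub>v (minv A *\<^sub>v b) + two_stage_c n F G s b = minv A *\<^sub>v b"
proof -
  let ?T = "two_stage_T n F G V s"
  define x where "x = minv A *\<^sub>v b"
  have T: "?T \<in> carrier_mat n n" by simp
  have x: "x \<in> carrier_vec n"
    unfolding x_def using minv_inverse(1)[OF carrier(1) assms(1)] assms(2) by simp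
  have "two_stage_c n F G s b = two_stage_C n F G s *\<^sub>v (A *\<^sub>v x)"
    unfolding x_def using minv_inverse[OF carrier(1) assms(1)] assms(2)
    by (simp add: two_stage_c_def two_stage_C_def assoc_mult_mat_vec[symmetric, of A n n _ n])
  also have "\<dots> = x - ?T *\<^sub>v x"
    using T x by (simp add: assoc_mult_mat_vec[symmetric, of _ n n A n] two_stage_C_mult_A
        minus_mult_distrib_mat_vec[OF one_carrier_mat T x])
  finally show ?thesis
    unfolding x_def[symmetric] using T x by (intro eq_vecI) auto
qed

lemma conjugate_pow_minv_F_G [simp]:
  "F * ((minv F * G) ^\<^sub>m j * minv F) = (G * minv F) ^\<^sub>m j"
proof -
  have "similar_mat_wit (G * minv F) (minv F * G) F (minv F)"
    by (rule similar_mat_witI[where n = n]) auto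
  then show ?thesis
    using similar_mat_wit_pow_id[of _ _ F "minv F" j] by simp
qed

lemma conjugate_two_stage_T:
  "F * two_stage_T n F G V s * minv F
    = (G * minv F) ^\<^sub>m s + msum n (\<lambda>j. (G * minv F) ^\<^sub>m j) s * (V * minv F)"
proof -
  have "F * two_stage_C n F G s = msum n (\<lambda>j. (G * minv F) ^\<^sub>m j) s"
    unfolding two_stage_C_def by (simp add: msum_mult_left[symmetric])
  moreover have "F * (two_stage_C n F G s * (V * minv F)) = (F * two_stage_C n F G s) * (V * minv F)"
    by (rule assoc_mult_mat[symmetric]) auto
  ultimately show ?thesis
    unfolding two_stage_T_eq
    by (simp add: mult_add_distrib_mat[of F n n _ n] add_mult_distrib_mat[of _ n n _ "minv F" n]
        msum_carrier)
qed

lemma one_minus_conjugate_two_stage_T: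
  "1\<^sub>m n - F * two_stage_T n F G V s * minv F
    = (1\<^sub>m n - (G * minv F) ^\<^sub>m s) * (1\<^sub>m n - F * (minv U * V) * minv F)"
proof -
  let ?C = "two_stage_C n F G s"
  have "1\<^sub>m n - F * two_stage_T n F G V s * minv F = F * (?C * A) * minv F"
    unfolding two_stage_C_mult_A by (rule conjugate_one_minus[symmetric]) (auto simp: two_stage_T_eq)
  also have "?C * A = (?C * U) * (minv U * A)"
    by simp
  also have "F * \<dots> * minv F = (F * (?C * U) * minv F) * (F * (minv U * A) * minv F)"
    by (rule conjugate_mult) auto
  also have "F * (?C * U) * minv F = 1\<^sub>m n - (G * minv F) ^\<^sub>m s"
    unfolding two_stage_C_mult_U by (subst conjugate_one_minus) auto
  also have "minv U * A = 1\<^sub>m n - minv U * V"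
    unfolding splitting(1) by (simp add: mult_minus_distrib_mat[OF carrier(6,2,3)])
  also have "F * \<dots> * minv F = 1\<^sub>m n - F * (minv U * V) * minv F"
    by (rule conjugate_one_minus) auto
  finally show ?thesis .
qed

lemma convergent_G_minv_F:
  assumes "convergent_splitting F G"
  shows "convergent_mat n (G * minv F)"
proof -
  have "convergent_mat n (minv F * G)"
    using assms unfolding convergent_splitting_def by (intro convergent_mat_if_rho_less_1) auto
  moreover have "similar_mat (G * minv F) (minv F * G)"
    using similar_mat_conjugate[of F n "minv F" "minv F * G"] by simp
  ultimately show ?thesis
    by (rule convergent_mat_similar) simp
qed

lemma convergent_conjugate_minv_U_V:
  assumes "convergent_splitting U V"
  shows "convergent_mat n (F * (minv U * V) * minv F)"
proof -
  have "convergent_mat n (minv U * V)"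
    using assms unfolding convergent_splitting_def by (intro convergent_mat_if_rho_less_1) simp_all
  moreover have "similar_mat (F * (minv U * V) * minv F) (minv U * V)"
    by (rule similar_mat_conjugate[of F n "minv F"]) simp_all
  ultimately show ?thesis
    by (rule convergent_mat_similar) simp
qed

lemma nonneg_F_minv_U:
  assumes "convergent_splitting F G"
  shows "nonneg_mat (F * minv U)"
proof -
  have "1\<^sub>m n - G * minv F = U * minv F"
    unfolding splitting(2) by (simp add: minus_mult_distrib_mat[OF carrier(4,5,7)])
  then have inv: "(F * minv U) * (1\<^sub>m n - G * minv F) = 1\<^sub>m n"
    by simp
  show ?thesis
    by (rule nonneg_mat_left_inverse_one_minus[OF _ _ inv nonneg(4) convergent_G_minv_F[OF assms]])
      simp_all
qed

lemma nonneg_conjugate_minv_U_V: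
  assumes "convergent_splitting F G"
  shows "nonneg_mat (F * (minv U * V) * minv F)"
proof -
  have "nonneg_mat ((F * minv U) * (V * minv F))"
    by (rule nonneg_mat_mult[OF _ nonneg_F_minv_U[OF assms] nonneg_mat_mult[OF _ nonneg(2,3)]])
      simp_all
  then show ?thesis
    by simp
qed

lemma nonneg_conjugate_two_stage_T: "nonneg_mat (F * two_stage_T n F G V s * minv F)"
proof -
  let ?S = "msum n (\<lambda>j. (G * minv F) ^\<^sub>m j) s"
  have S: "?S \<in> carrier_mat n n" by (simp add: msum_carrier)
  have pow: "nonneg_mat ((G * minv F) ^\<^sub>m j)" for j
    by (rule nonneg_mat_pow[of _ n, OF _ nonneg(4)]) simp
  have "nonneg_mat ?S"
    by (rule nonneg_mat_msum[of _ n, OF _ pow]) simp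
  moreover have "nonneg_mat (V * minv F)"
    by (rule nonneg_mat_mult[OF _ nonneg(2,3)]) simp
  ultimately have "nonneg_mat (?S * (V * minv F))"
    by (rule nonneg_mat_mult[rotated]) (use S in simp)
  then show ?thesis
    unfolding conjugate_two_stage_T using S pow by (intro nonneg_mat_add[of _ n n]) simp_all
qed

lemma convergent_two_stage_T:
  assumes "convergent_splitting U V" "convergent_splitting F G" "s \<ge> 1"
  shows "convergent_mat n (two_stage_T n F G V s)"
proof -
  let ?T = "two_stage_T n F G V s"
  have R_pow: "nonneg_mat ((G * minv F) ^\<^sub>m s)" "convergent_mat n ((G * minv F) ^\<^sub>m s)"
    using nonneg_mat_pow[of _ n, OF _ nonneg(4)] convergent_mat_pow[OF _ convergent_G_minv_F[OF assms(2)]]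
      assms(3) by simp_all
  have "convergent_mat n (F * ?T * minv F)"
    by (rule convergent_mat_if_nonneg_factorization[OF _ _ _ nonneg_conjugate_two_stage_T
          one_minus_conjugate_two_stage_T R_pow nonneg_conjugate_minv_U_V[OF assms(2)]
          convergent_conjugate_minv_U_V[OF assms(1)]]) simp_all
  moreover have "similar_mat ?T (F * ?T * minv F)"
    using similar_mat_conjugate[of "minv F" n F "F * ?T * minv F"] by simp
  ultimately show ?thesis
    by (rule convergent_mat_similar) simp
qed

lemma rho_two_stage_T_less_1:
  assumes "convergent_splitting U V" "convergent_splitting F G" "s \<ge> 1"
  shows "rho (two_stage_T n F G V s) < 1"
proof (cases "n = 0")
  case True
  (* For n = 0 the spectrum is empty and rho is the unspecified value Max {}; but all 0 x 0
     matrices are equal, so the hypothesis on U^-1 V carries over. *)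
  have "two_stage_T n F G V s = minv U * V"
    using two_stage_T_carrier[of s] carrier True by (intro eq_matI) auto
  then show ?thesis
    using assms(1) unfolding convergent_splitting_def by simp
next
  case False
  then show ?thesis
    using rho_less_1_if_convergent_mat[OF two_stage_T_carrier _ convergent_two_stage_T[OF assms]] by simp
qed

end

theorem corollary3p4:
  fixes n :: nat and A U V F G :: "real mat"
  assumes "A \<in> carrier_mat n n" and "invertible_mat A"
    and "regular_splitting n A U V" and "convergent_splitting U V"
    and "weak_regular_splitting_II n U F G" and "convergent_splitting F G"
    and "V * minv F * G = G * minv F * V"
  shows "\<forall>s::nat. s \<ge> 1 \<longrightarrow>
           rho (two_stage_T n F G V s) < 1 \<and>
           (\<forall>b x0. b \<in> carrier_vec n \<longrightarrow> x0 \<in> carrier_vec n \<longrightarrow>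
              (\<forall>i<n. (\<lambda>k. two_stage_iter n F G V s b x0 k $ i) \<longlonglongrightarrow> (minv A *\<^sub>v b) $ i))"
proof (intro allI impI conjI)
  fix s :: nat assume s: "s \<ge> 1"
  interpret two_stage_splitting n A U V F G
    using assms(3,5) by unfold_locales
  show "rho (two_stage_T n F G V s) < 1"
    using assms(4,6) s by (rule rho_two_stage_T_less_1)
  fix b x0 :: "real vec" and i :: nat
  assume b: "b \<in> carrier_vec n" and "x0 \<in> carrier_vec n" "i < n"
  then show "(\<lambda>k. two_stage_iter n F G V s b x0 k $ i) \<longlonglongrightarrow> (minv A *\<^sub>v b) $ i"
    unfolding two_stage_iter_def
    using minv_inverse(1)[OF assms(1,2)]
    by (intro affine_iteration_tendsto[OF two_stage_T_carrier convergent_two_stage_T[OF assms(4,6) s]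
          _ two_stage_fixpoint[OF assms(2) b]]) simp_all
qed

end
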